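(* Let $R$ be a ring with unity and involution $*$, and let $a,b,c\in R$. The following conditions are equivalent. (1) $a$ is left dual $(b,c)$-core invertible. (2) There exists some $x\in Rc$ such that $bxab=b$, $(xab)^*=xab$ and $xabx=x$. (3) There exists some $x\in R$ such that $bxab=b$, $xR=b^*R$ and $Rx\subseteq Rc$. (4) There exists some $x\in R$ such that $bxab=b$, $l(x)=l(b^* )$ and $Rx\subseteq Rc$. (5) There exists some $x\in R$ such that $bxab=b$, $Rx\subseteq Rc$ and $xR\subseteq b^*R$. (6) There exists some $x\in R$ such that $bxab=b$, $Rx\subseteq Rc$ and $l(b^* )\subseteq l(x)$. (7) There exist a projection $q\in R$ and an idempotent $p\in R$ such that $Rb\subseteq Rq\subseteq Rab$, $Rp\subseteq Rc$ and $abR\subseteq pR$. In this case (with $q,p$ as in (7)), for any inner inverse $(ab)^-$ of $ab$, the element $q(ab)^-p$ is a left dual $(b,c)$-core inverse of $a$.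
   Context: An element $a\in R$ is called left dual $(b,c)$-core invertible if there exists $x\in Rc$ such that $bxab=b$ and $(xab)^*=xab$; such an $x$ is called a left dual $(b,c)$-core inverse of $a$ (it need not be unique). For $x\in R$, $l(x)=\{r\in R: rx=0\}$ is the left annihilator of $x$. A projection is an element $q$ with $q^2=q=q^*$. An inner inverse of $y$ is any $z$ with $yzy=y$. *)

theory Defs
  imports Main
begin

class ring_involution = ring_1 +
  fixes star :: "'a \<Rightarrow> 'a"
  assumes star_add: "star (x + y) = star x + star y"
      and star_mult: "star (x * y) = star y * star x"
      and star_star: "star (star x) = x"

definition left_ideal :: "'a::ring_1 \<Rightarrow> 'a set" where
  "left_ideal x = {r * x | r. True}"

definition right_ideal :: "'a::ring_1 \<Rightarrow> 'a set" where
  "right_ideal x = {x * r | r. True}"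

definition lann :: "'a::ring_1 \<Rightarrow> 'a set" where
  "lann x = {r. r * x = 0}"

definition projection :: "'a::ring_involution \<Rightarrow> bool" where
  "projection q \<longleftrightarrow> q * q = q \<and> star q = q"

definition idempotent :: "'a::ring_1 \<Rightarrow> bool" where
  "idempotent p \<longleftrightarrow> p * p = p"

definition inner_inverse :: "'a::ring_1 \<Rightarrow> 'a \<Rightarrow> bool" where
  "inner_inverse z y \<longleftrightarrow> y * z * y = y"

definition left_dual_core_inverse :: "'a::ring_involution \<Rightarrow> 'a \<Rightarrow> 'a \<Rightarrow> 'a \<Rightarrow> bool" where
  "left_dual_core_inverse a b c x \<longleftrightarrow>
     x \<in> left_ideal c \<and> b * x * a * b = b \<and> star (x * a * b) = x * a * b"

definition left_dual_core_invertible :: "'a::ring_involution \<Rightarrow> 'a \<Rightarrow> 'a \<Rightarrow> bool" where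
  "left_dual_core_invertible a b c \<longleftrightarrow> (\<exists>x. left_dual_core_inverse a b c x)"

end

theory Submission
  imports Defs
begin

text \<open>For any \<open>x\<close> with \<open>bxab = b\<close> the element \<open>xab\<close> is an idempotent fixing \<open>b\<close> from
  the right, and \<open>(xab)* b* = b*\<close>. So \<open>1 - (xab)*\<close> lies in \<open>l(b*)\<close>; once \<open>l(b*) \<subseteq> l(x)\<close> this
  gives \<open>x = (xab)* x\<close>, hence \<open>xab = (xab)* xab\<close> is self-adjoint. Conditions (2)--(6) are
  successively weaker ways of securing that annihilator inclusion, with (2) obtained from (1)
  by passing to \<open>xabx\<close>. For (7) take \<open>q = xab\<close>, \<open>p = abx\<close>; conversely \<open>b = bq\<close> with
  \<open>q \<in> R ab\<close> makes \<open>ab\<close> regular, and \<open>q (ab)\<^sup>- p\<close> satisfies \<open>(q (ab)\<^sup>- p) ab = q\<close>.\<close>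

lemma in_left_ideal_iff: "x \<in> left_ideal y \<longleftrightarrow> (\<exists>r. x = r * y)"
  unfolding left_ideal_def by blast

lemma in_right_ideal_iff: "x \<in> right_ideal y \<longleftrightarrow> (\<exists>r. x = y * r)"
  unfolding right_ideal_def by blast

lemma left_ideal_subset_iff: "left_ideal x \<subseteq> left_ideal y \<longleftrightarrow> x \<in> left_ideal y"
proof
  assume "left_ideal x \<subseteq> left_ideal y"
  moreover have "x \<in> left_ideal x"
    unfolding in_left_ideal_iff by (metis mult_1)
  ultimately show "x \<in> left_ideal y" by blast
next
  assume "x \<in> left_ideal y"
  then show "left_ideal x \<subseteq> left_ideal y"
    unfolding left_ideal_def by (auto simp: mult.assoc[symmetric])
qed

lemma right_ideal_subset_iff: "right_ideal x \<subseteq> right_ideal y \<longleftrightarrow> x \<in> right_ideal y"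
proof
  assume "right_ideal x \<subseteq> right_ideal y"
  moreover have "x \<in> right_ideal x"
    unfolding in_right_ideal_iff by (metis mult_1_right)
  ultimately show "x \<in> right_ideal y" by blast
next
  assume "x \<in> right_ideal y"
  then show "right_ideal x \<subseteq> right_ideal y"
    unfolding right_ideal_def by (auto simp: mult.assoc)
qed

lemma lann_antimono:
  assumes "right_ideal x \<subseteq> right_ideal y"
  shows "lann y \<subseteq> lann x"
proof -
  obtain r where "x = y * r"
    using assms unfolding right_ideal_subset_iff in_right_ideal_iff by blast
  then show ?thesis
    unfolding lann_def by (auto simp: mult.assoc[symmetric])
qed

lemma star_fixed_if_lann_star_subset:
  fixes a b x :: "'a::ring_involution"
  assumes inner: "b * x * a * b = b" and lann: "lann (star b) \<subseteq> lann x"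
  shows "star (x * a * b) = x * a * b"
proof -
  have "star (x * a * b) * star b = star b"
    by (metis inner star_mult mult.assoc)
  then have "1 - star (x * a * b) \<in> lann (star b)"
    unfolding lann_def by (simp add: left_diff_distrib)
  with lann have "(1 - star (x * a * b)) * x = 0"
    unfolding lann_def by blast
  then have "x = star (x * a * b) * x"
    by (simp add: left_diff_distrib)
  then have "x * a * b = star (x * a * b) * (x * a * b)"
    by (metis mult.assoc)
  then show ?thesis
    by (metis star_mult star_star)
qed

lemma left_dual_core_inverse_reflexive:
  fixes a b c x :: "'a::ring_involution"
  assumes "left_dual_core_inverse a b c x"
  defines "y \<equiv> x * a * b * x"
  shows "left_dual_core_inverse a b c y" and "y * a * b * y = y"
proof -
  obtain r where x: "x = r * c" "b * x * a * b = b" "star (x * a * b) = x * a * b"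
    using assms unfolding left_dual_core_inverse_def in_left_ideal_iff by blast
  have yab: "y * a * b = x * a * b"
    using x(2) unfolding y_def by (metis mult.assoc)
  have "y = (x * a * b * r) * c"
    using x(1) unfolding y_def by (simp add: mult.assoc)
  moreover have "b * y * a * b = b"
    using x(2) unfolding y_def by (metis mult.assoc)
  ultimately show "left_dual_core_inverse a b c y"
    unfolding left_dual_core_inverse_def in_left_ideal_iff using x(3) yab by metis
  show "y * a * b * y = y"
    using x(2) unfolding y_def yab by (metis mult.assoc)
qed

lemma right_ideal_eq_star_if_reflexive:
  fixes a b x :: "'a::ring_involution"
  assumes inner: "b * x * a * b = b" and sa: "star (x * a * b) = x * a * b"
    and reflexive: "x * a * b * x = x"
  shows "right_ideal x = right_ideal (star b)"
proof -
  have "x = star (x * a * b) * x"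
    using sa reflexive by simp
  then have "x = star b * (star a * star x * x)"
    by (simp add: star_mult mult.assoc)
  moreover have "star b = x * (a * b * star b)"
    by (metis inner sa star_mult mult.assoc)
  ultimately show ?thesis
    unfolding set_eq_subset right_ideal_subset_iff in_right_ideal_iff by blast
qed

lemma left_dual_core_inverse_projection_idempotent:
  fixes a b c x :: "'a::ring_involution"
  assumes "left_dual_core_inverse a b c x"
  shows "projection (x * a * b)" and "idempotent (a * b * x)"
    and "left_ideal b \<subseteq> left_ideal (x * a * b)"
    and "left_ideal (x * a * b) \<subseteq> left_ideal (a * b)"
    and "left_ideal (a * b * x) \<subseteq> left_ideal c"
    and "right_ideal (a * b) \<subseteq> right_ideal (a * b * x)"
proof -
  obtain r where x: "x = r * c" "b * x * a * b = b" "star (x * a * b) = x * a * b"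
    using assms unfolding left_dual_core_inverse_def in_left_ideal_iff by blast
  show "projection (x * a * b)"
    unfolding projection_def using x(2,3) by (metis mult.assoc)
  show "idempotent (a * b * x)"
    unfolding idempotent_def using x(2) by (metis mult.assoc)
  show "left_ideal b \<subseteq> left_ideal (x * a * b)"
    unfolding left_ideal_subset_iff in_left_ideal_iff using x(2) by (metis mult.assoc)
  show "left_ideal (x * a * b) \<subseteq> left_ideal (a * b)"
    unfolding left_ideal_subset_iff in_left_ideal_iff by (metis mult.assoc)
  show "left_ideal (a * b * x) \<subseteq> left_ideal c"
    unfolding left_ideal_subset_iff in_left_ideal_iff x(1) by (metis mult.assoc)
  show "right_ideal (a * b) \<subseteq> right_ideal (a * b * x)"
    unfolding right_ideal_subset_iff in_right_ideal_iff using x(2) by (metis mult.assoc)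
qed

lemma inner_inverse_exists_if_left_ideal_between:
  fixes a b q :: "'a::ring_1"
  assumes "idempotent q" and "left_ideal b \<subseteq> left_ideal q" and "left_ideal q \<subseteq> left_ideal (a * b)"
  shows "\<exists>z. inner_inverse z (a * b)"
proof -
  obtain r s where "b = r * q" "q = s * (a * b)"
    using assms(2,3) unfolding left_ideal_subset_iff in_left_ideal_iff by blast
  then have "a * b * s * (a * b) = a * b"
    using assms(1) unfolding idempotent_def by (metis mult.assoc)
  then show ?thesis
    unfolding inner_inverse_def by blast
qed

lemma left_dual_core_inverse_of_projection_idempotent:
  fixes a b c p q z :: "'a::ring_involution"
  assumes q: "projection q" and p: "idempotent p"
    and "left_ideal b \<subseteq> left_ideal q" and "left_ideal q \<subseteq> left_ideal (a * b)"
    and "left_ideal p \<subseteq> left_ideal c" and "right_ideal (a * b) \<subseteq> right_ideal p"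
    and z: "inner_inverse z (a * b)"
  shows "left_dual_core_inverse a b c (q * z * p)"
proof -
  obtain r1 r2 r3 s where h: "b = r1 * q" "q = r2 * (a * b)" "p = r3 * c" "a * b = p * s"
    using assms(3-6) unfolding left_ideal_subset_iff right_ideal_subset_iff
      in_left_ideal_iff in_right_ideal_iff by blast
  have "p * (a * b) = a * b"
    using p h(4) unfolding idempotent_def by (metis mult.assoc)
  moreover have "q * z * (a * b) = q"
    using z h(2) unfolding inner_inverse_def by (metis mult.assoc)
  ultimately have xab: "q * z * p * a * b = q"
    by (metis mult.assoc)
  have "b * q = b"
    using q h(1) unfolding projection_def by (metis mult.assoc)
  then show ?thesis
    unfolding left_dual_core_inverse_def in_left_ideal_iff
    using xab q h(3) unfolding projection_def by (metis mult.assoc)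
qed

theorem theorem2p2:
  fixes a b c :: "'a::ring_involution"
  defines "C1 \<equiv> left_dual_core_invertible a b c"
      and "C2 \<equiv> (\<exists>x. x \<in> left_ideal c \<and> b * x * a * b = b \<and> star (x * a * b) = x * a * b
                       \<and> x * a * b * x = x)"
      and "C3 \<equiv> (\<exists>x. b * x * a * b = b \<and> right_ideal x = right_ideal (star b)
                       \<and> left_ideal x \<subseteq> left_ideal c)"
      and "C4 \<equiv> (\<exists>x. b * x * a * b = b \<and> lann x = lann (star b)
                       \<and> left_ideal x \<subseteq> left_ideal c)"
      and "C5 \<equiv> (\<exists>x. b * x * a * b = b \<and> left_ideal x \<subseteq> left_ideal c
                       \<and> right_ideal x \<subseteq> right_ideal (star b))"
      and "C6 \<equiv> (\<exists>x. b * x * a * b = b \<and> left_ideal x \<subseteq> left_ideal c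
                       \<and> lann (star b) \<subseteq> lann x)"
      and "C7 \<equiv> (\<lambda>q p. projection q \<and> idempotent p
                       \<and> left_ideal b \<subseteq> left_ideal q \<and> left_ideal q \<subseteq> left_ideal (a * b)
                       \<and> left_ideal p \<subseteq> left_ideal c \<and> right_ideal (a * b) \<subseteq> right_ideal p)"
  shows "(C1 \<longleftrightarrow> C2) \<and> (C1 \<longleftrightarrow> C3) \<and> (C1 \<longleftrightarrow> C4) \<and> (C1 \<longleftrightarrow> C5) \<and> (C1 \<longleftrightarrow> C6)
         \<and> (C1 \<longleftrightarrow> (\<exists>q p. C7 q p))
         \<and> (\<forall>q p z. C7 q p \<and> inner_inverse z (a * b) \<longrightarrow> left_dual_core_inverse a b c (q * z * p))"
proof -
  have 12: "C1 \<Longrightarrow> C2"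
    unfolding C1_def C2_def left_dual_core_invertible_def
    using left_dual_core_inverse_reflexive unfolding left_dual_core_inverse_def by blast
  have 21: "C2 \<Longrightarrow> C1"
    unfolding C1_def C2_def left_dual_core_invertible_def left_dual_core_inverse_def by blast
  have 23: "C2 \<Longrightarrow> C3"
    unfolding C2_def C3_def using right_ideal_eq_star_if_reflexive left_ideal_subset_iff by blast
  have 34: "C3 \<Longrightarrow> C4"
    unfolding C3_def C4_def using lann_antimono by (metis subset_antisym order_refl)
  have 35: "C3 \<Longrightarrow> C5" and 46: "C4 \<Longrightarrow> C6"
    unfolding C3_def C4_def C5_def C6_def by auto
  have 56: "C5 \<Longrightarrow> C6"
    unfolding C5_def C6_def using lann_antimono by blast
  have 61: "C6 \<Longrightarrow> C1"
    unfolding C6_def C1_def left_dual_core_invertible_def left_dual_core_inverse_def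
    using star_fixed_if_lann_star_subset left_ideal_subset_iff by blast
  have 17: "C1 \<Longrightarrow> \<exists>q p. C7 q p"
    unfolding C1_def C7_def left_dual_core_invertible_def
    by (metis left_dual_core_inverse_projection_idempotent)
  have formula: "C7 q p \<Longrightarrow> inner_inverse z (a * b) \<Longrightarrow> left_dual_core_inverse a b c (q * z * p)"
    for q p z
    unfolding C7_def using left_dual_core_inverse_of_projection_idempotent by blast
  have 71: "C1" if C7: "C7 q p" for q p
  proof -
    have "idempotent q"
      using C7 unfolding C7_def projection_def idempotent_def by blast
    then obtain z where "inner_inverse z (a * b)"
      using C7 inner_inverse_exists_if_left_ideal_between unfolding C7_def by blast
    then show ?thesis
      unfolding C1_def left_dual_core_invertible_def using formula C7 by blast
  qed
  show ?thesis
    using 12 21 23 34 35 46 56 61 17 71 formula by blast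
qed

end
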